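(* Let $r\le s$, $M$ the space of complex $r\times s$ matrices, $D_k\subset M$ the variety of matrices of rank at most $k$ ($0\le k<r$), and $p\ge0$ an integer. The contact locus $\mathrm{Cont}^{\ge p}(D_k)\subset M_\infty$ is invariant under $G_\infty$, and an orbit $O_\lambda$ ($\lambda$ a pre-partition of length at most $r$) is contained in $\mathrm{Cont}^{\ge p}(D_k)$ if and only if $\lambda_{r-k}+\dots+\lambda_r\ge p$.
   Context: $D_k$ is defined by the ideal $I_{D_k}$ of $(k+1)\times(k+1)$ minors. The $\mathbb{C}$-points of the arc space $M_\infty$ are $r\times s$ matrices over $\mathbb{C}[[t]]$; $G=GL_r\times GL_s$ acts on $M$ by $(g,h)\cdot A=gAh^{-1}$, and $G_\infty$ acts on $M_\infty$. For $\gamma\in M_\infty$ (viewed as $\mathrm{Spec}\,K[[t]]\to M$), $\mathrm{ord}_\gamma(I_{D_k})=e$ where $\gamma^*I_{D_k}=(t^e)$, $e\in\mathbb N\cup\{\infty\}$; $\mathrm{Cont}^{\ge p}(D_k)=\{\gamma:\mathrm{ord}_\gamma(I_{D_k})\ge p\}$. A pre-partition of length at most $r$ is $\lambda_1\ge\dots\ge\lambda_r\ge0$ in $\mathbb N\cup\{\infty\}$ (with $\infty>n$, $\infty+n=\infty$); $\delta_\lambda$ is the $r\times s$ matrix with first $s-r$ columns zero and last $r$ columns $\mathrm{diag}(t^{\lambda_1},\dots,t^{\lambda_r})$ ($t^\infty=0$); $O_\lambda=G_\infty\cdot\delta_\lambda$. *)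

theory Defs
  imports "Jordan_Normal_Form.DL_Submatrix" "Jordan_Normal_Form.Determinant"
    "HOL-Computational_Algebra.Formal_Power_Series" "HOL-Library.Extended_Nat"
begin

definition arcs :: "nat \<Rightarrow> nat \<Rightarrow> complex fps mat set" where
  "arcs r s = carrier_mat r s"

definition tpow :: "enat \<Rightarrow> complex fps" where
  "tpow e = (case e of enat n \<Rightarrow> fps_X ^ n | \<infinity> \<Rightarrow> 0)"

definition ideal_gen :: "'a :: comm_ring_1 set \<Rightarrow> 'a set" where
  "ideal_gen S = {x. \<exists>F c. finite F \<and> F \<subseteq> S \<and> x = (\<Sum>g\<in>F. c g * g)}"

text \<open>Generators of gamma^* I_{D_k}: the (k+1) x (k+1) minors of the matrix gamma.\<close>
definition minors :: "nat \<Rightarrow> 'a :: comm_ring_1 mat \<Rightarrow> 'a set" where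
  "minors k A = {det (submatrix A I J) | I J.
      I \<subseteq> {..<dim_row A} \<and> J \<subseteq> {..<dim_col A} \<and> card I = k + 1 \<and> card J = k + 1}"

definition ord_Dk :: "nat \<Rightarrow> complex fps mat \<Rightarrow> enat" where
  "ord_Dk k A = (THE e. ideal_gen (minors k A) = ideal_gen {tpow e})"

definition Cont_ge :: "nat \<Rightarrow> nat \<Rightarrow> nat \<Rightarrow> nat \<Rightarrow> complex fps mat set" where
  "Cont_ge r s k p = {A \<in> arcs r s. enat p \<le> ord_Dk k A}"

definition GL :: "nat \<Rightarrow> complex fps mat set" where
  "GL n = {g \<in> carrier_mat n n. invertible_mat g}"

definition act :: "nat \<Rightarrow> complex fps mat \<Rightarrow> complex fps mat \<Rightarrow> complex fps mat \<Rightarrow> complex fps mat" where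
  "act s g h A = g * A * (THE h'. h' \<in> carrier_mat s s \<and> h * h' = 1\<^sub>m s \<and> h' * h = 1\<^sub>m s)"

text \<open>Pre-partitions of length at most r, indexed 0..r-1 (lambda_{i+1} in the paper is lam i).\<close>
definition prepartition :: "nat \<Rightarrow> (nat \<Rightarrow> enat) \<Rightarrow> bool" where
  "prepartition r lam \<longleftrightarrow> (\<forall>i j. i \<le> j \<longrightarrow> j < r \<longrightarrow> lam j \<le> lam i)"

definition delta :: "nat \<Rightarrow> nat \<Rightarrow> (nat \<Rightarrow> enat) \<Rightarrow> complex fps mat" where
  "delta r s lam = mat r s (\<lambda>(i, j). if j = s - r + i then tpow (lam i) else 0)"

definition orbit :: "nat \<Rightarrow> nat \<Rightarrow> (nat \<Rightarrow> enat) \<Rightarrow> complex fps mat set" where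
  "orbit r s lam = {act s g h (delta r s lam) | g h. g \<in> GL r \<and> h \<in> GL s}"

end

theory Submission
  imports Defs
begin

text \<open>Over the discrete valuation ring \<complex>[[t]] the ideal generated by the (k+1)-minors of an arc
  is principal, generated by a minor of least order; hence the arc lies in Cont^{\<ge>p}(D_k) iff
  t^p divides all its (k+1)-minors. Multiplying by any matrix on either side preserves this
  divisibility, since by multilinearity every minor of C A is a combination of minors of A; this
  gives the invariance. Row i of \<delta>_\<lambda> is a multiple of t^(\<lambda>_i), so a minor on the rows I is a
  multiple of t^(\<Sum>_{i \<in> I} \<lambda>_i). As \<lambda> is decreasing, this exponent is least for the last k+1
  rows, where the minor is diagonal and equals t^(\<lambda>_{r-k} + ... + \<lambda>_r).\<close>

lemma zero_mem_ideal_gen: "0 \<in> ideal_gen S"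
  unfolding ideal_gen_def by (intro CollectI exI[of _ "{}"]) simp

lemma mem_ideal_gen: "m \<in> S \<Longrightarrow> m \<in> ideal_gen S"
  unfolding ideal_gen_def by (intro CollectI exI[of _ "{m}"] exI[of _ "\<lambda>_. 1"]) simp

lemma ideal_gen_mult_closed:
  assumes "x \<in> ideal_gen S"
  shows "c * x \<in> ideal_gen S"
proof -
  from assms obtain F a where F: "finite F" "F \<subseteq> S" and x: "x = (\<Sum>g\<in>F. a g * g)"
    unfolding ideal_gen_def by blast
  have "c * x = (\<Sum>g\<in>F. (c * a g) * g)"
    unfolding x by (simp add: sum_distrib_left mult.assoc)
  with F show ?thesis
    unfolding ideal_gen_def by (intro CollectI exI[of _ F] exI[of _ "\<lambda>g. c * a g"]) simp
qed

lemma ideal_gen_dvd: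
  assumes "\<forall>m\<in>S. d dvd m" and "x \<in> ideal_gen S"
  shows "d dvd x"
  using assms unfolding ideal_gen_def by (auto intro!: dvd_sum)

lemma ideal_gen_eq_multiples:
  assumes "\<forall>m\<in>S. a dvd m" and "a \<in> ideal_gen S"
  shows "ideal_gen S = {x. a dvd x}"
proof (rule subset_antisym)
  show "ideal_gen S \<subseteq> {x. a dvd x}"
    using ideal_gen_dvd[OF assms(1)] by auto
  show "{x. a dvd x} \<subseteq> ideal_gen S"
  proof
    fix x assume "x \<in> {x. a dvd x}"
    then obtain c where "x = a * c" by (auto elim: dvdE)
    then show "x \<in> ideal_gen S"
      using ideal_gen_mult_closed[OF assms(2), of c] by (simp add: mult.commute)
  qed
qed

lemma ideal_gen_singleton: "ideal_gen {a} = {x. a dvd x}"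
  by (rule ideal_gen_eq_multiples) (auto intro: mem_ideal_gen)

lemma common_divisor_iff_dvd_generator:
  assumes "ideal_gen S = {x. a dvd x}"
  shows "(\<forall>m\<in>S. d dvd m) \<longleftrightarrow> d dvd a"
proof
  assume "\<forall>m\<in>S. d dvd m"
  moreover have "a \<in> ideal_gen S" using assms by simp
  ultimately show "d dvd a" by (rule ideal_gen_dvd)
next
  assume "d dvd a"
  moreover have "a dvd m" if "m \<in> S" for m
    using mem_ideal_gen[OF that] assms by simp
  ultimately show "\<forall>m\<in>S. d dvd m" by (blast intro: dvd_trans)
qed

lemma X_pow_dvd_tpow_iff: "fps_X ^ p dvd tpow e \<longleftrightarrow> enat p \<le> e"
  by (cases e) (auto simp: tpow_def fps_dvd_iff)

lemma tpow_dvd_tpow_iff: "tpow a dvd tpow b \<longleftrightarrow> a \<le> b"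
  by (cases a; cases b) (simp_all add: tpow_def fps_dvd_iff)

lemma tpow_sum: "finite A \<Longrightarrow> tpow (\<Sum>i\<in>A. f i) = (\<Prod>i\<in>A. tpow (f i))"
proof (induction A rule: finite_induct)
  case empty
  show ?case by (simp add: tpow_def zero_enat_def)
next
  case (insert a A)
  have "tpow (x + y) = tpow x * tpow y" for x y
    by (cases x; cases y) (simp_all add: tpow_def power_add)
  with insert show ?case by simp
qed

lemma ideal_gen_eq_tpow:
  fixes S :: "complex fps set"
  assumes "finite S"
  shows "\<exists>e. ideal_gen S = ideal_gen {tpow e}"
proof (cases "S \<subseteq> {0}")
  case True
  then have "ideal_gen S = {x. tpow \<infinity> dvd x}"
    by (intro ideal_gen_eq_multiples) (auto simp: tpow_def zero_mem_ideal_gen)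
  then show ?thesis by (auto simp: ideal_gen_singleton)
next
  case False
  define n where "n = Min (subdegree ` (S - {0}))"
  have fin: "finite (subdegree ` (S - {0}))" and ne: "S - {0} \<noteq> {}"
    using assms False by auto
  have "n \<in> subdegree ` (S - {0})"
    unfolding n_def using fin ne by (intro Min_in) auto
  then obtain m0 where m0: "m0 \<in> S" "m0 \<noteq> 0" "subdegree m0 = n"
    by auto
  have n_le: "n \<le> subdegree m" if "m \<in> S" "m \<noteq> 0" for m
    using that fin unfolding n_def by simp
  have dvd_all: "\<forall>m\<in>S. fps_X ^ n dvd m"
  proof
    fix m assume "m \<in> S"
    then show "fps_X ^ n dvd m" using n_le by (cases "m = 0") (simp_all add: fps_dvd_iff)
  qed
  have "m0 dvd fps_X ^ n"
    using m0 by (simp add: fps_dvd_iff)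
  then obtain u where "fps_X ^ n = m0 * u"
    by (rule dvdE)
  then have "fps_X ^ n \<in> ideal_gen S"
    using ideal_gen_mult_closed[OF mem_ideal_gen[OF m0(1)], of u] by (simp add: mult.commute)
  with dvd_all have "ideal_gen S = {x. tpow (enat n) dvd x}"
    by (simp add: tpow_def ideal_gen_eq_multiples)
  then show ?thesis by (auto simp: ideal_gen_singleton)
qed

lemma finite_minors: "finite (minors k A)"
proof -
  have "minors k A \<subseteq> (\<lambda>(I, J). det (submatrix A I J)) ` (Pow {..<dim_row A} \<times> Pow {..<dim_col A})"
    unfolding minors_def by auto
  then show ?thesis by (rule finite_subset) auto
qed

lemma tpow_ideal_gen_inject:
  assumes "ideal_gen {tpow e} = ideal_gen {tpow e'}"
  shows "e = e'"
proof -
  from assms have "\<forall>x. tpow e dvd x \<longleftrightarrow> tpow e' dvd x"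
    by (simp add: ideal_gen_singleton set_eq_iff)
  then have "tpow e dvd tpow e'" "tpow e' dvd tpow e"
    by (blast intro: dvd_refl)+
  then show ?thesis
    unfolding tpow_dvd_tpow_iff by (rule order.antisym)
qed

lemma ideal_gen_minors_eq: "ideal_gen (minors k A) = {x. tpow (ord_Dk k A) dvd x}"
proof -
  obtain e where e: "ideal_gen (minors k A) = ideal_gen {tpow e}"
    using ideal_gen_eq_tpow[OF finite_minors] by blast
  have "ideal_gen (minors k A) = ideal_gen {tpow (ord_Dk k A)}"
    unfolding ord_Dk_def
  proof (rule theI[where P = "\<lambda>e. ideal_gen (minors k A) = ideal_gen {tpow e}", OF e])
    fix e' assume e': "ideal_gen (minors k A) = ideal_gen {tpow e'}"
    show "e' = e" by (rule tpow_ideal_gen_inject) (simp only: e'[symmetric] e)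
  qed
  then show ?thesis by (simp add: ideal_gen_singleton)
qed

lemma enat_le_ord_Dk_iff: "enat p \<le> ord_Dk k A \<longleftrightarrow> (\<forall>m\<in>minors k A. fps_X ^ p dvd m)"
  by (simp add: common_divisor_iff_dvd_generator[OF ideal_gen_minors_eq] X_pow_dvd_tpow_iff)

lemma det_mat_swap: "det (mat n n (\<lambda>(i,j). G i j)) = det (mat n n (\<lambda>(i,j). G j i))"
proof -
  have "mat n n (\<lambda>(i,j). G j i) = transpose_mat (mat n n (\<lambda>(i,j). G i j))"
    by (rule eq_matI) auto
  then show ?thesis by (metis det_transpose mat_carrier)
qed

lemma bij_betw_pick:
  assumes "finite I"
  shows "bij_betw (pick I) {..<card I} I"
proof -
  have "strict_mono_on {..<card I} (pick I)"
    by (intro strict_mono_onI pick_mono) auto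
  then have inj: "inj_on (pick I) {..<card I}"
    by (rule strict_mono_on_imp_inj_on)
  moreover have "pick I ` {..<card I} \<subseteq> I"
    using pick_in_set by auto
  moreover have "card (pick I ` {..<card I}) = card I"
    using card_image[OF inj] by simp
  ultimately show ?thesis
    using card_subset_eq[OF assms] unfolding bij_betw_def by blast
qed

lemma dvd_det_rows_pick:
  fixes d :: "'a :: comm_ring_1"
  assumes inj: "inj_on f {..<n}" and img: "f ` {..<n} = I"
    and dv: "d dvd det (mat n n (\<lambda>(i,j). F (pick I i) j))"
  shows "d dvd det (mat n n (\<lambda>(i,j). F (f i) j))"
proof -
  have fin: "finite I" using img by auto
  have cardI: "card I = n" using card_image[OF inj] img by simp
  have bij: "bij_betw (pick I) {..<n} I" using bij_betw_pick[OF fin] cardI by simp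
  have bijf: "bij_betw f {..<n} I" using inj img unfolding bij_betw_def by simp
  define p where "p i = (if i < n then the_inv_into {..<n} (pick I) (f i) else i)" for i
  have b1: "bij_betw (the_inv_into {..<n} (pick I) \<circ> f) {..<n} {..<n}"
    using bijf bij_betw_the_inv_into[OF bij] by (rule bij_betw_trans)
  have b2: "bij_betw p {..<n} {..<n}"
    using b1 by (rule bij_betw_cong[THEN iffD1, rotated]) (auto simp: p_def)
  have perm: "p permutes {0..<n}"
    using b2 by (intro bij_imp_permutes) (auto simp: p_def atLeast0LessThan)
  have pf: "pick I (p i) = f i" if "i < n" for i
  proof -
    have "f i \<in> I" using img that by auto
    then show ?thesis using that f_the_inv_into_f_bij_betw[OF bij] by (simp add: p_def)
  qed
  have pn: "p i < n" if "i < n" for i using b2 that unfolding bij_betw_def by auto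
  define A where "A = mat n n (\<lambda>(i,j). F (pick I i) j)"
  have A: "A \<in> carrier_mat n n" unfolding A_def by simp
  have "mat n n (\<lambda>(i,j). A $$ (p i, j)) = mat n n (\<lambda>(i,j). F (f i) j)"
    by (rule eq_matI) (auto simp: A_def pn pf)
  then have "det (mat n n (\<lambda>(i,j). F (f i) j)) = signof p * det A"
    using det_permute_rows[OF A perm] by simp
  then show ?thesis using dv unfolding A_def by simp
qed

text \<open>Unlike in \<open>minors\<close>, rows and columns are selected by arbitrary injections, in any
  order, which only changes the sign of the minor.\<close>

definition dvd_minors :: "'a :: comm_ring_1 \<Rightarrow> nat \<Rightarrow> 'a mat \<Rightarrow> bool" where
  "dvd_minors d n A \<longleftrightarrow> (\<forall>f g. inj_on f {..<n} \<longrightarrow> f ` {..<n} \<subseteq> {..<dim_row A} \<longrightarrow>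
     inj_on g {..<n} \<longrightarrow> g ` {..<n} \<subseteq> {..<dim_col A} \<longrightarrow>
     d dvd det (mat n n (\<lambda>(i,j). A $$ (f i, g j))))"

lemma submatrix_eq_pick:
  assumes "I \<subseteq> {..<dim_row A}" "J \<subseteq> {..<dim_col A}" "card I = n" "card J = n"
  shows "submatrix A I J = mat n n (\<lambda>(i,j). A $$ (pick I i, pick J j))"
proof -
  have "{i. i < dim_row A \<and> i \<in> I} = I" "{j. j < dim_col A \<and> j \<in> J} = J" using assms by auto
  then show ?thesis unfolding submatrix_def using assms by simp
qed

lemma dvd_minorsI:
  assumes "\<forall>m\<in>minors k A. d dvd m"
  shows "dvd_minors d (Suc k) A"
  unfolding dvd_minors_def
proof (intro allI impI)
  fix f g
  let ?n = "Suc k"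
  assume f: "inj_on f {..<?n}" "f ` {..<?n} \<subseteq> {..<dim_row A}"
    and g: "inj_on g {..<?n}" "g ` {..<?n} \<subseteq> {..<dim_col A}"
  define I where "I = f ` {..<?n}"
  define J where "J = g ` {..<?n}"
  have cI: "card I = ?n" unfolding I_def using card_image[OF f(1)] by simp
  have cJ: "card J = ?n" unfolding J_def using card_image[OF g(1)] by simp
  have "det (submatrix A I J) \<in> minors k A"
    unfolding minors_def using f(2) g(2) cI cJ unfolding I_def J_def by auto
  then have "d dvd det (submatrix A I J)" using assms by blast
  then have d0: "d dvd det (mat ?n ?n (\<lambda>(i,j). A $$ (pick I i, pick J j)))"
    using submatrix_eq_pick[of I A J ?n] f(2) g(2) cI cJ unfolding I_def J_def by simp
  have d1: "d dvd det (mat ?n ?n (\<lambda>(i,j). (\<lambda>a j. A $$ (a, pick J j)) (f i) j))"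
    by (rule dvd_det_rows_pick[OF f(1) I_def[symmetric]]) (use d0 in simp)
  have d2: "d dvd det (mat ?n ?n (\<lambda>(i,j). (\<lambda>b i. A $$ (f i, b)) (pick J i) j))"
    using d1 det_mat_swap[of ?n "\<lambda>i j. A $$ (f i, pick J j)"] by simp
  have d3: "d dvd det (mat ?n ?n (\<lambda>(i,j). (\<lambda>b i. A $$ (f i, b)) (g i) j))"
    by (rule dvd_det_rows_pick[OF g(1) J_def[symmetric] d2])
  then show "d dvd det (mat ?n ?n (\<lambda>(i,j). A $$ (f i, g j)))"
    using det_mat_swap[of ?n "\<lambda>i j. A $$ (f i, g j)"] by simp
qed

lemma dvd_minorsD:
  assumes "dvd_minors d (Suc k) A" and "m \<in> minors k A"
  shows "d dvd m"
proof -
  from assms(2) obtain I J where IJ: "m = det (submatrix A I J)" "I \<subseteq> {..<dim_row A}" "J \<subseteq> {..<dim_col A}"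
    "card I = Suc k" "card J = Suc k" unfolding minors_def by auto
  have finI: "finite I" "finite J" using IJ finite_subset by blast+
  have bI: "bij_betw (pick I) {..<Suc k} I" using bij_betw_pick[OF finI(1)] IJ by simp
  have bJ: "bij_betw (pick J) {..<Suc k} J" using bij_betw_pick[OF finI(2)] IJ by simp
  have "d dvd det (mat (Suc k) (Suc k) (\<lambda>(i,j). A $$ (pick I i, pick J j)))"
    using assms bI bJ IJ unfolding dvd_minors_def bij_betw_def by auto
  then show ?thesis using IJ submatrix_eq_pick[of I A J "Suc k"] by simp
qed

lemma dvd_minors_transpose:
  assumes "dvd_minors d n A"
  shows "dvd_minors d n (transpose_mat A)"
  unfolding dvd_minors_def
proof (intro allI impI)
  fix f g
  assume f: "inj_on f {..<n}" "f ` {..<n} \<subseteq> {..<dim_row (transpose_mat A)}"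
    and g: "inj_on g {..<n}" "g ` {..<n} \<subseteq> {..<dim_col (transpose_mat A)}"
  have "mat n n (\<lambda>(i,j). transpose_mat A $$ (f i, g j)) = mat n n (\<lambda>(i,j). A $$ (g j, f i))"
  proof (rule eq_matI)
    fix i j assume "i < dim_row (mat n n (\<lambda>(i,j). A $$ (g j, f i)))" "j < dim_col (mat n n (\<lambda>(i,j). A $$ (g j, f i)))"
    then have ij: "i < n" "j < n" by auto
    then have "f i < dim_col A" "g j < dim_row A" using f(2) g(2) by auto
    then show "mat n n (\<lambda>(i,j). transpose_mat A $$ (f i, g j)) $$ (i, j) = mat n n (\<lambda>(i,j). A $$ (g j, f i)) $$ (i, j)"
      using ij by simp
  qed auto
  moreover have "d dvd det (mat n n (\<lambda>(i,j). A $$ (g i, f j)))"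
    using assms f g unfolding dvd_minors_def by auto
  ultimately show "d dvd det (mat n n (\<lambda>(i,j). transpose_mat A $$ (f i, g j)))"
    using det_mat_swap[of n "\<lambda>i j. A $$ (g i, f j)"] by simp
qed

text \<open>Expanding \<open>det (C * B)\<close> by multilinearity in the rows, each term is a multiple of the
  determinant of some \<open>n\<close> rows of \<open>B\<close>, which vanishes unless these rows are distinct.\<close>

lemma dvd_det_mult_if_dvd_row_selections:
  fixes d :: "'a :: comm_ring_1"
  assumes C: "C \<in> carrier_mat n m" and B: "B \<in> carrier_mat m n"
    and hyp: "\<And>h. inj_on h {0..<n} \<Longrightarrow> h ` {0..<n} \<subseteq> {0..<m} \<Longrightarrow> d dvd det (mat\<^sub>r n n (\<lambda>i. row B (h i)))"
  shows "d dvd det (C * B)"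
proof -
  let ?F = "{f. (\<forall>i\<in>{0..<n}. f i \<in> {0..<m}) \<and> (\<forall>i. i \<notin> {0..<n} \<longrightarrow> f i = i)}"
  have "det (C * B) = (\<Sum>f\<in>?F. det (mat\<^sub>r n n (\<lambda>i. C $$ (i, f i) \<cdot>\<^sub>v row B (f i))))"
    unfolding mat_mul_finsum_alt[OF C B]
    by (rule det_linear_rows_sum[of "{0..<m}" "\<lambda>i k. C $$ (i,k) \<cdot>\<^sub>v row B k" n]) (use B in auto)
  also have "d dvd \<dots>"
  proof (rule dvd_sum)
    fix f assume f: "f \<in> ?F"
    have rows: "(\<lambda>i. row B (f i)) \<in> {0..<n} \<rightarrow> carrier_vec n" using B by auto
    have eq: "det (mat\<^sub>r n n (\<lambda>i. C $$ (i, f i) \<cdot>\<^sub>v row B (f i))) =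
      prod (\<lambda>i. C $$ (i, f i)) {0..<n} * det (mat\<^sub>r n n (\<lambda>i. row B (f i)))"
      by (rule det_rows_mul[OF rows])
    show "d dvd det (mat\<^sub>r n n (\<lambda>i. C $$ (i, f i) \<cdot>\<^sub>v row B (f i)))"
    proof (cases "inj_on f {0..<n}")
      case True
      have "f ` {0..<n} \<subseteq> {0..<m}" using f by auto
      then have "d dvd det (mat\<^sub>r n n (\<lambda>i. row B (f i)))" using hyp True by blast
      then show ?thesis unfolding eq by simp
    next
      case False
      then obtain i j where ij: "i \<in> {0..<n}" "j \<in> {0..<n}" "f i = f j" "i \<noteq> j"
        unfolding inj_on_def by blast
      have "det (mat\<^sub>r n n (\<lambda>i. row B (f i))) = 0"
      proof (rule det_identical_rows[OF mat_row_carrierI ij(4)])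
        show "i < n" "j < n" using ij by auto
        show "row (mat\<^sub>r n n (\<lambda>i. row B (f i))) i = row (mat\<^sub>r n n (\<lambda>i. row B (f i))) j"
          using ij B by simp
      qed
      then show ?thesis unfolding eq by simp
    qed
  qed
  finally show ?thesis .
qed

lemma mat_select_mult:
  assumes C: "C \<in> carrier_mat r m" and A: "A \<in> carrier_mat m c"
    and f: "\<And>i. i < n \<Longrightarrow> f i < r" and g: "\<And>j. j < n \<Longrightarrow> g j < c"
  shows "mat n n (\<lambda>(i,j). (C * A) $$ (f i, g j))
    = mat n m (\<lambda>(i,l). C $$ (f i, l)) * mat m n (\<lambda>(l,j). A $$ (l, g j))"
proof (rule eq_matI)
  fix i j assume "i < dim_row (mat n m (\<lambda>(i,l). C $$ (f i, l)) * mat m n (\<lambda>(l,j). A $$ (l, g j)))"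
    and "j < dim_col (mat n m (\<lambda>(i,l). C $$ (f i, l)) * mat m n (\<lambda>(l,j). A $$ (l, g j)))"
  then have ij: "i < n" "j < n" by auto
  have "(C * A) $$ (f i, g j) = (\<Sum>l<m. C $$ (f i, l) * A $$ (l, g j))"
    using f[OF ij(1)] g[OF ij(2)] C A by (simp add: scalar_prod_def lessThan_atLeast0)
  then show "mat n n (\<lambda>(i,j). (C * A) $$ (f i, g j)) $$ (i, j)
    = (mat n m (\<lambda>(i,l). C $$ (f i, l)) * mat m n (\<lambda>(l,j). A $$ (l, g j))) $$ (i, j)"
    using ij by (simp add: scalar_prod_def lessThan_atLeast0)
qed auto

lemma dvd_minors_mult_left:
  assumes dm: "dvd_minors d n A" and C: "C \<in> carrier_mat r (dim_row A)"
  shows "dvd_minors d n (C * A)"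
  unfolding dvd_minors_def
proof (intro allI impI)
  fix f g
  assume f: "inj_on f {..<n}" "f ` {..<n} \<subseteq> {..<dim_row (C * A)}"
    and g: "inj_on g {..<n}" "g ` {..<n} \<subseteq> {..<dim_col (C * A)}"
  let ?C' = "mat n (dim_row A) (\<lambda>(i,l). C $$ (f i, l))"
  let ?A' = "mat (dim_row A) n (\<lambda>(l,j). A $$ (l, g j))"
  have "d dvd det (?C' * ?A')"
  proof (rule dvd_det_mult_if_dvd_row_selections)
    fix h assume h: "inj_on h {0..<n}" "h ` {0..<n} \<subseteq> {0..<dim_row A}"
    have "mat\<^sub>r n n (\<lambda>i. row ?A' (h i)) = mat n n (\<lambda>(i,j). A $$ (h i, g j))"
    proof (rule eq_matI)
      fix i j assume "i < dim_row (mat n n (\<lambda>(i,j). A $$ (h i, g j)))"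
        and "j < dim_col (mat n n (\<lambda>(i,j). A $$ (h i, g j)))"
      then have ij: "i < n" "j < n" by auto
      then have "h i < dim_row A" using h(2) by (auto simp: image_subset_iff)
      then show "mat\<^sub>r n n (\<lambda>i. row ?A' (h i)) $$ (i, j) = mat n n (\<lambda>(i,j). A $$ (h i, g j)) $$ (i, j)"
        using ij by simp
    qed auto
    moreover have "d dvd det (mat n n (\<lambda>(i,j). A $$ (h i, g j)))"
      using dm h g unfolding dvd_minors_def by (auto simp: atLeast0LessThan)
    ultimately show "d dvd det (mat\<^sub>r n n (\<lambda>i. row ?A' (h i)))" by simp
  qed auto
  also have "?C' * ?A' = mat n n (\<lambda>(i,j). (C * A) $$ (f i, g j))"
    by (rule mat_select_mult[symmetric, OF C]) (use f g C in auto)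
  finally show "d dvd det (mat n n (\<lambda>(i,j). (C * A) $$ (f i, g j)))" .
qed

lemma dvd_minors_mult_right:
  assumes GM: "dvd_minors d n A" and H: "H \<in> carrier_mat (dim_col A) c"
  shows "dvd_minors d n (A * H)"
proof -
  have A: "A \<in> carrier_mat (dim_row A) (dim_col A)" by simp
  have "dvd_minors d n (transpose_mat H * transpose_mat A)"
    by (rule dvd_minors_mult_left[OF dvd_minors_transpose[OF GM]]) (use H in simp)
  then have "dvd_minors d n (transpose_mat (transpose_mat H * transpose_mat A))" by (rule dvd_minors_transpose)
  moreover have "transpose_mat (transpose_mat H * transpose_mat A) = A * H"
    using arg_cong[OF transpose_mult[OF A H], of transpose_mat] by simp
  ultimately show ?thesis by simp
qed

lemma sum_last_le_sum_subset:
  fixes lam :: "nat \<Rightarrow> 'a :: ordered_comm_monoid_add"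
  assumes antitone: "\<And>i j. i \<le> j \<Longrightarrow> j < R \<Longrightarrow> lam j \<le> lam i"
  shows "S \<subseteq> {..<r} \<Longrightarrow> r \<le> R \<Longrightarrow> card S = n \<Longrightarrow> sum lam {r - n..<r} \<le> sum lam S"
proof (induction n arbitrary: S r)
  case 0
  then have "S = {}" using finite_subset by fastforce
  then show ?case by simp
next
  case (Suc n)
  have fin: "finite S" using Suc.prems(1) finite_subset by blast
  have "S \<noteq> {}" using Suc.prems(3) by auto
  define m where "m = Max S"
  have mS: "m \<in> S"
    unfolding m_def using fin \<open>S \<noteq> {}\<close> by (rule Max_in)
  then have mr: "m < r" using Suc.prems(1) by auto
  have S'_sub: "S - {m} \<subseteq> {..<m}"
    using fin unfolding m_def by (auto simp: order.strict_iff_order)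
  have card_S': "card (S - {m}) = n"
    using Suc.prems(3) mS fin by simp
  have nm: "n \<le> m"
    using card_mono[OF _ S'_sub] card_S' by simp
  have IH: "sum lam {m - n..<m} \<le> sum lam (S - {m})"
    using Suc.IH[OF S'_sub _ card_S'] mr Suc.prems(2) by simp
  have "sum lam {r - Suc n..<r - 1} = (\<Sum>i<n. lam (r - Suc n + i))"
    using nm mr by (simp add: sum.atLeastLessThan_shift_0[of _ "r - Suc n"] atLeast0LessThan)
  also have "\<dots> \<le> (\<Sum>i<n. lam (m - n + i))"
    using nm mr Suc.prems(2) by (intro sum_mono antitone) auto
  also have "\<dots> = sum lam {m - n..<m}"
    using nm by (simp add: sum.atLeastLessThan_shift_0[of _ "m - n"] atLeast0LessThan)
  finally have rest: "sum lam {r - Suc n..<r - 1} \<le> sum lam (S - {m})"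
    using IH by (rule order.trans)
  have "{r - Suc n..<r} = insert (r - 1) {r - Suc n..<r - 1}"
    using nm mr by auto
  then have "sum lam {r - Suc n..<r} = lam (r - 1) + sum lam {r - Suc n..<r - 1}"
    by simp
  also have "\<dots> \<le> lam m + sum lam (S - {m})"
    using mr Suc.prems(2) rest by (intro add_mono antitone) auto
  also have "\<dots> = sum lam S"
    using fin mS by (simp add: sum.remove)
  finally show ?case .
qed

lemma prod_dvd_det:
  fixes A :: "'a :: comm_ring_1 mat"
  assumes A: "A \<in> carrier_mat n n" and dvd: "\<And>i j. i < n \<Longrightarrow> j < n \<Longrightarrow> x i dvd A $$ (i, j)"
  shows "(\<Prod>i<n. x i) dvd det A"
proof -
  have "(\<Prod>i<n. x i) dvd signof q * (\<Prod>i = 0..<n. A $$ (i, q i))" if "q permutes {0..<n}" for q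
  proof -
    have "(\<Prod>i = 0..<n. x i) dvd (\<Prod>i = 0..<n. A $$ (i, q i))"
      by (rule prod_dvd_prod) (use dvd permutes_in_image[OF that] in auto)
    then show ?thesis by (simp add: atLeast0LessThan)
  qed
  then show ?thesis unfolding det_def'[OF A] by (auto intro: dvd_sum)
qed

lemma delta_carrier: "delta r s lam \<in> carrier_mat r s"
  unfolding delta_def by simp

lemma delta_index:
  "a < r \<Longrightarrow> b < s \<Longrightarrow> delta r s lam $$ (a, b) = (if b = s - r + a then tpow (lam a) else 0)"
  unfolding delta_def by simp

lemma det_delta_trailing_minor:
  assumes "r \<le> s" and "n \<le> r"
  shows "det (mat n n (\<lambda>(i,j). delta r s lam $$ (r - n + i, s - n + j))) = tpow (\<Sum>i\<in>{r - n..<r}. lam i)"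
proof -
  let ?M = "mat n n (\<lambda>(i,j). delta r s lam $$ (r - n + i, s - n + j))"
  have M: "?M \<in> carrier_mat n n" by simp
  have entries: "?M $$ (i, j) = (if i = j then tpow (lam (r - n + i)) else 0)" if "i < n" "j < n" for i j
    using that assms by (auto simp: delta_index)
  then have "upper_triangular ?M"
    unfolding upper_triangular_def by auto
  then have "det ?M = (\<Prod>i = 0..<n. ?M $$ (i, i))"
    using det_upper_triangular[OF _ M] prod_list_diag_prod[of ?M] by simp
  also have "\<dots> = (\<Prod>i = 0..<n. tpow (lam (r - n + i)))"
    by (rule prod.cong) (use assms in \<open>auto simp: delta_index\<close>)
  also have "\<dots> = tpow (\<Sum>i\<in>{r - n..<r}. lam i)"
    using assms by (simp add: tpow_sum sum.atLeastLessThan_shift_0[of _ "r - n"] add.commute)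
  finally show ?thesis .
qed

lemma dvd_minors_delta_iff:
  assumes rs: "r \<le> s" and nr: "n \<le> r" and pp: "prepartition r lam"
  shows "dvd_minors (fps_X ^ p) n (delta r s lam) \<longleftrightarrow> enat p \<le> (\<Sum>i\<in>{r - n..<r}. lam i)"
proof
  assume dm: "dvd_minors (fps_X ^ p) n (delta r s lam)"
  have "fps_X ^ p dvd det (mat n n (\<lambda>(i,j). delta r s lam $$ (r - n + i, s - n + j)))"
  proof (rule dm[unfolded dvd_minors_def, rule_format])
    show "inj_on (\<lambda>i. r - n + i) {..<n}" "inj_on (\<lambda>j. s - n + j) {..<n}"
      by (auto intro: inj_onI)
    show "(\<lambda>i. r - n + i) ` {..<n} \<subseteq> {..<dim_row (delta r s lam)}"
      "(\<lambda>j. s - n + j) ` {..<n} \<subseteq> {..<dim_col (delta r s lam)}"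
      using rs nr carrier_matD[OF delta_carrier[of r s lam]] by auto
  qed
  then show "enat p \<le> (\<Sum>i\<in>{r - n..<r}. lam i)"
    by (simp add: det_delta_trailing_minor[OF rs nr] X_pow_dvd_tpow_iff)
next
  assume p: "enat p \<le> (\<Sum>i\<in>{r - n..<r}. lam i)"
  show "dvd_minors (fps_X ^ p) n (delta r s lam)"
    unfolding dvd_minors_def
  proof (intro allI impI)
    fix f g
    assume f: "inj_on f {..<n}" "f ` {..<n} \<subseteq> {..<dim_row (delta r s lam)}"
      and g: "inj_on g {..<n}" "g ` {..<n} \<subseteq> {..<dim_col (delta r s lam)}"
    have fr: "f i < r" and gs: "g i < s" if "i < n" for i
      using f(2) g(2) that delta_carrier[of r s lam] by auto
    have "tpow (\<Sum>a\<in>f ` {..<n}. lam a) = (\<Prod>i<n. tpow (lam (f i)))"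
      by (simp add: tpow_sum sum.reindex[OF f(1)])
    also have "\<dots> dvd det (mat n n (\<lambda>(i,j). delta r s lam $$ (f i, g j)))"
      by (rule prod_dvd_det) (simp_all add: delta_index fr gs)
    finally have minor: "tpow (\<Sum>a\<in>f ` {..<n}. lam a) dvd det (mat n n (\<lambda>(i,j). delta r s lam $$ (f i, g j)))" .
    have "(\<Sum>i\<in>{r - n..<r}. lam i) \<le> (\<Sum>a\<in>f ` {..<n}. lam a)"
      by (rule sum_last_le_sum_subset[where R = r])
        (use pp fr card_image[OF f(1)] in \<open>auto simp: prepartition_def\<close>)
    with p have "enat p \<le> (\<Sum>a\<in>f ` {..<n}. lam a)"
      by (rule order.trans)
    then have "fps_X ^ p dvd tpow (\<Sum>a\<in>f ` {..<n}. lam a)"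
      by (simp add: X_pow_dvd_tpow_iff)
    then show "fps_X ^ p dvd det (mat n n (\<lambda>(i,j). delta r s lam $$ (f i, g j)))"
      using minor by (rule dvd_trans)
  qed
qed

lemma Cont_ge_iff_dvd_minors:
  "A \<in> Cont_ge r s k p \<longleftrightarrow> A \<in> carrier_mat r s \<and> dvd_minors (fps_X ^ p) (Suc k) A"
  unfolding Cont_ge_def arcs_def enat_le_ord_Dk_iff
  using dvd_minorsI dvd_minorsD by blast

lemma GL_inverse_carrier:
  assumes "h \<in> GL s"
  shows "(THE h'. h' \<in> carrier_mat s s \<and> h * h' = 1\<^sub>m s \<and> h' * h = 1\<^sub>m s) \<in> carrier_mat s s"
proof -
  let ?P = "\<lambda>h'. h' \<in> carrier_mat s s \<and> h * h' = 1\<^sub>m s \<and> h' * h = 1\<^sub>m s"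
  have h: "h \<in> carrier_mat s s" and "invertible_mat h"
    using assms unfolding GL_def by auto
  then obtain B where hB: "h * B = 1\<^sub>m (dim_row h)" and Bh: "B * h = 1\<^sub>m (dim_row B)"
    unfolding invertible_mat_def inverts_mat_def by blast
  have "dim_col B = s" "dim_row B = s"
    using arg_cong[OF hB, of dim_col] arg_cong[OF Bh, of dim_col] h by simp_all
  then have Bc: "B \<in> carrier_mat s s" by auto
  with hB Bh h have B: "?P B" by simp
  have "x = B" if "?P x" for x
  proof -
    have x: "x \<in> carrier_mat s s" "x * h = 1\<^sub>m s" using that by auto
    have "x = x * (h * B)" using x B by simp
    also have "\<dots> = (x * h) * B" by (rule assoc_mult_mat[symmetric]) (use x h Bc in auto)
    also have "\<dots> = B" using x Bc by simp
    finally show ?thesis .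
  qed
  with B have "?P (THE h'. ?P h')"
    by (rule theI)
  then show ?thesis by simp
qed

lemma act_Cont_ge:
  assumes "A \<in> Cont_ge r s k p" "g \<in> GL r" "h \<in> GL s"
  shows "act s g h A \<in> Cont_ge r s k p"
proof -
  let ?h' = "THE h'. h' \<in> carrier_mat s s \<and> h * h' = 1\<^sub>m s \<and> h' * h = 1\<^sub>m s"
  have A: "A \<in> carrier_mat r s" and dm: "dvd_minors (fps_X ^ p) (Suc k) A"
    using assms(1) Cont_ge_iff_dvd_minors by auto
  have g: "g \<in> carrier_mat r r" using assms(2) unfolding GL_def by auto
  have h': "?h' \<in> carrier_mat s s" using assms(3) by (rule GL_inverse_carrier)
  have "dvd_minors (fps_X ^ p) (Suc k) (g * A)"
    using dm by (rule dvd_minors_mult_left) (use g A in simp)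
  then have "dvd_minors (fps_X ^ p) (Suc k) (g * A * ?h')"
    by (rule dvd_minors_mult_right) (use g A h' in simp)
  moreover have "g * A * ?h' \<in> carrier_mat r s" using g A h' by simp
  ultimately show ?thesis unfolding act_def using Cont_ge_iff_dvd_minors by blast
qed

lemma act_one:
  assumes "A \<in> carrier_mat r s"
  shows "act s (1\<^sub>m r) (1\<^sub>m s) A = A"
proof -
  have "(THE h'. h' \<in> carrier_mat s s \<and> 1\<^sub>m s * h' = 1\<^sub>m s \<and> h' * 1\<^sub>m s = 1\<^sub>m s) = (1\<^sub>m s :: complex fps mat)"
  proof (rule the_equality)
    fix h' :: "complex fps mat" assume "h' \<in> carrier_mat s s \<and> 1\<^sub>m s * h' = 1\<^sub>m s \<and> h' * 1\<^sub>m s = 1\<^sub>m s"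
    then show "h' = 1\<^sub>m s" using left_mult_one_mat[of h' s s] by auto
  qed simp
  then show ?thesis unfolding act_def using assms by simp
qed

lemma one_GL: "1\<^sub>m n \<in> GL n"
  unfolding GL_def invertible_mat_def inverts_mat_def by (auto intro!: exI[of _ "1\<^sub>m n"])

theorem proposition3p3:
  fixes r s k p :: nat
  assumes "r \<le> s" and "k < r"
  shows "(\<forall>A \<in> Cont_ge r s k p. \<forall>g \<in> GL r. \<forall>h \<in> GL s. act s g h A \<in> Cont_ge r s k p)
    \<and> (\<forall>lam. prepartition r lam \<longrightarrow>
          (orbit r s lam \<subseteq> Cont_ge r s k p \<longleftrightarrow> (\<Sum>i\<in>{r - k - 1..<r}. lam i) \<ge> enat p))"
proof (intro conjI allI impI ballI)
  fix A g h assume "A \<in> Cont_ge r s k p" "g \<in> GL r" "h \<in> GL s"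
  then show "act s g h A \<in> Cont_ge r s k p" by (rule act_Cont_ge)
next
  fix lam assume "prepartition r lam"
  then have delta_iff: "delta r s lam \<in> Cont_ge r s k p \<longleftrightarrow> enat p \<le> (\<Sum>i\<in>{r - k - 1..<r}. lam i)"
    using Cont_ge_iff_dvd_minors dvd_minors_delta_iff[OF assms(1), of "Suc k"] assms(2) delta_carrier
    by (simp add: Suc_le_eq)
  have "delta r s lam \<in> orbit r s lam"
    unfolding orbit_def
    by (intro CollectI exI[of _ "1\<^sub>m r"] exI[of _ "1\<^sub>m s"]) (simp add: act_one delta_carrier one_GL)
  moreover have "orbit r s lam \<subseteq> Cont_ge r s k p" if "delta r s lam \<in> Cont_ge r s k p"
    unfolding orbit_def using act_Cont_ge[OF that] by blast
  ultimately show "orbit r s lam \<subseteq> Cont_ge r s k p \<longleftrightarrow> (\<Sum>i\<in>{r - k - 1..<r}. lam i) \<ge> enat p"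
    using delta_iff by blast
qed

end
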